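(* For every $\sigma\in\widetilde{S}_{AB}$, $\sigma=\inf^{\widetilde{S}_{AB}}\underline{\sigma}$, where $\underline{\sigma}:=\widetilde{S}^{pure}_{AB}\cap\{\sigma'\in\widetilde{S}_{AB}\;\vert\;\sigma\sqsubseteq_{\widetilde{S}_{AB}}\sigma'\}$, and $\widetilde{S}^{pure}_{AB}=\{\sigma_A\widetilde{\otimes}\sigma_B\;\vert\;\sigma_A\in\mathfrak{S}^{pure}_A,\sigma_B\in\mathfrak{S}^{pure}_B\}=Max(\widetilde{S}_{AB})$ is the set of completely meet-irreducible elements of $\widetilde{S}_{AB}$.
   Context: $(\mathfrak{S}_A,\mathfrak{E}_A,\epsilon^{\mathfrak{S}_A})$, $(\mathfrak{S}_B,\mathfrak{E}_B,\epsilon^{\mathfrak{S}_B})$ are States/Effects Chu spaces valued in $\mathfrak{B}=\{\mathbf{Y},\mathbf{N},\bot\}$ (meet $\wedge$, product $\bullet$: $x\bullet\mathbf{Y}=x$, $x\bullet\mathbf{N}=\mathbf{N}$, $\bot\bullet\bot=\bot$), whose spaces of states admit a description in terms of pure states: the set $\mathfrak{S}^{pure}$ of completely meet-irreducible elements equals the set of maximal elements and every state is the infimum of the pure states above it. The minimal tensor product $\widetilde{S}_{AB}$ consists of the maps $\inf^{\widetilde{S}_{AB}}_{i\in I}\sigma_{i,A}\widetilde{\otimes}\sigma_{i,B}:(\mathfrak{l}_A,\mathfrak{l}_B)\mapsto\bigwedge_{i\in I}\epsilon^{\mathfrak{S}_A}_{\mathfrak{l}_A}(\sigma_{i,A})\bullet\epsilon^{\mathfrak{S}_B}_{\mathfrak{l}_B}(\sigma_{i,B})$,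 ordered pointwise. *)

theory Defs
  imports Main
begin

datatype B = Yb | Nb | Bot

definition leB :: "B \<Rightarrow> B \<Rightarrow> bool" where
  "leB x y \<longleftrightarrow> x = Bot \<or> x = y"

definition MeetB :: "B set \<Rightarrow> B" where
  "MeetB X = (if X = {Yb} then Yb else if X = {Nb} then Nb else Bot)"

text \<open>Product: x*Y = x, x*N = N, Bot*Bot = Bot (commutative, so Y*Bot = Bot, N*Bot = N).\<close>
definition prodB :: "B \<Rightarrow> B \<Rightarrow> B" where
  "prodB x y = (if y = Yb then x else if y = Nb then Nb else if x = Nb then Nb else Bot)"

definition is_glb_in :: "('x \<Rightarrow> 'x \<Rightarrow> bool) \<Rightarrow> 'x set \<Rightarrow> 'x set \<Rightarrow> 'x \<Rightarrow> bool" where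
  "is_glb_in le P X m \<longleftrightarrow> m \<in> P \<and> (\<forall>x\<in>X. le m x) \<and> (\<forall>y\<in>P. (\<forall>x\<in>X. le y x) \<longrightarrow> le y m)"

definition cmi_in :: "('x \<Rightarrow> 'x \<Rightarrow> bool) \<Rightarrow> 'x set \<Rightarrow> 'x set" where
  "cmi_in le P = {x \<in> P. \<forall>X. X \<subseteq> P \<longrightarrow> X \<noteq> {} \<longrightarrow> is_glb_in le P X x \<longrightarrow> x \<in> X}"

definition max_in :: "('x \<Rightarrow> 'x \<Rightarrow> bool) \<Rightarrow> 'x set \<Rightarrow> 'x set" where
  "max_in le P = {x \<in> P. \<forall>y\<in>P. le x y \<longrightarrow> y = x}"

text \<open>States form the poset 'a (the whole type), effects the type 'e, evaluation eps l s.\<close>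
definition SE_Chu :: "('e \<Rightarrow> 'a::order \<Rightarrow> B) \<Rightarrow> bool" where
  "SE_Chu eps \<longleftrightarrow>
     (\<forall>s s'. s \<le> s' \<longleftrightarrow> (\<forall>l. leB (eps l s) (eps l s'))) \<and>
     (\<forall>X::'a set. X \<noteq> {} \<longrightarrow> (\<exists>m. is_glb_in (\<le>) UNIV X m)) \<and>
     (\<forall>X m l. X \<noteq> {} \<longrightarrow> is_glb_in (\<le>) UNIV X m \<longrightarrow> eps l m = MeetB (eps l ` X)) \<and>
     (\<exists>u. \<forall>s. eps u s = Yb)"

definition pure_states :: "('e \<Rightarrow> 'a::order \<Rightarrow> B) \<Rightarrow> 'a set" where
  "pure_states eps = cmi_in (\<le>) UNIV"

definition pure_description :: "('e \<Rightarrow> 'a::order \<Rightarrow> B) \<Rightarrow> bool" where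
  "pure_description eps \<longleftrightarrow>
     cmi_in (\<le>) (UNIV::'a set) = max_in (\<le>) UNIV \<and>
     (\<forall>s. is_glb_in (\<le>) UNIV (pure_states eps \<inter> {s'. s \<le> s'}) s)"

definition tens :: "('e \<Rightarrow> 'a \<Rightarrow> B) \<Rightarrow> ('f \<Rightarrow> 'b \<Rightarrow> B) \<Rightarrow> 'a \<Rightarrow> 'b \<Rightarrow> ('e \<times> 'f \<Rightarrow> B)" where
  "tens epsA epsB sA sB = (\<lambda>(lA, lB). prodB (epsA lA sA) (epsB lB sB))"

text \<open>inf over a nonempty family (given as a set of pairs) of elementary tensors.\<close>
definition infTens :: "('e \<Rightarrow> 'a \<Rightarrow> B) \<Rightarrow> ('f \<Rightarrow> 'b \<Rightarrow> B) \<Rightarrow> ('a \<times> 'b) set \<Rightarrow> ('e \<times> 'f \<Rightarrow> B)" where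
  "infTens epsA epsB I = (\<lambda>(lA, lB). MeetB ((\<lambda>(sA, sB). prodB (epsA lA sA) (epsB lB sB)) ` I))"

definition minTensor :: "('e \<Rightarrow> 'a \<Rightarrow> B) \<Rightarrow> ('f \<Rightarrow> 'b \<Rightarrow> B) \<Rightarrow> ('e \<times> 'f \<Rightarrow> B) set" where
  "minTensor epsA epsB = {infTens epsA epsB I | I. I \<noteq> {}}"

definition leF :: "('x \<Rightarrow> B) \<Rightarrow> ('x \<Rightarrow> B) \<Rightarrow> bool" where
  "leF f g \<longleftrightarrow> (\<forall>x. leB (f x) (g x))"

end

theory Submission
  imports Defs
begin

(* Every state is the infimum of the pure states above it, and the product of B distributes over
   infima; hence a \<otimes> b is the infimum of the pure tensors a' \<otimes> b' with a \<le> a', b \<le> b', and every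
   element of the minimal tensor product is the infimum of a nonempty set of pure tensors.
   Pure tensors are maximal: evaluating a \<otimes> b \<sqsubseteq> inf c\<^sub>i \<otimes> d\<^sub>i against effects (l, u) and (u, l),
   with u the unit effect, gives a \<le> c\<^sub>i and b \<le> d\<^sub>i. Finally, a set of maximal elements from
   which every element is obtained as an infimum consists precisely of the maximal and of the
   completely meet-irreducible elements, whatever the order. *)

lemma B_eqI:
  fixes p q :: B
  shows "(p = Yb \<longleftrightarrow> q = Yb) \<Longrightarrow> (p = Nb \<longleftrightarrow> q = Nb) \<Longrightarrow> p = q"
  by (cases p; cases q) auto

lemma MeetB_eq_Yb_iff: "X \<noteq> {} \<Longrightarrow> MeetB X = Yb \<longleftrightarrow> (\<forall>x\<in>X. x = Yb)"
  unfolding MeetB_def by auto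

lemma MeetB_eq_Nb_iff: "X \<noteq> {} \<Longrightarrow> MeetB X = Nb \<longleftrightarrow> (\<forall>x\<in>X. x = Nb)"
  unfolding MeetB_def by auto

lemma MeetB_singleton [simp]: "MeetB {x} = x"
  unfolding MeetB_def by (cases x) auto

lemma prodB_eq_Yb_iff: "prodB x y = Yb \<longleftrightarrow> x = Yb \<and> y = Yb"
  unfolding prodB_def by (cases x; cases y) auto

lemma prodB_eq_Nb_iff: "prodB x y = Nb \<longleftrightarrow> x = Nb \<or> y = Nb"
  unfolding prodB_def by (cases x; cases y) auto

lemma prodB_Yb_right [simp]: "prodB x Yb = x"
  unfolding prodB_def by simp

lemma prodB_Yb_left [simp]: "prodB Yb x = x"
  unfolding prodB_def by (cases x) auto

lemma leB_MeetB_iff: "X \<noteq> {} \<Longrightarrow> leB x (MeetB X) \<longleftrightarrow> (\<forall>y\<in>X. leB x y)"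
  unfolding leB_def MeetB_def by (cases x) auto

lemma MeetB_UN:
  assumes "J \<noteq> {}" and "\<And>j. j \<in> J \<Longrightarrow> S j \<noteq> {}"
  shows "MeetB (\<Union>j\<in>J. S j) = MeetB ((\<lambda>j. MeetB (S j)) ` J)"
proof (rule B_eqI)
  have "(\<Union>j\<in>J. S j) \<noteq> {}" using assms by blast
  with assms show "MeetB (\<Union>j\<in>J. S j) = Yb \<longleftrightarrow> MeetB ((\<lambda>j. MeetB (S j)) ` J) = Yb"
    and "MeetB (\<Union>j\<in>J. S j) = Nb \<longleftrightarrow> MeetB ((\<lambda>j. MeetB (S j)) ` J) = Nb"
    by (simp_all add: MeetB_eq_Yb_iff MeetB_eq_Nb_iff)
qed

lemma prodB_MeetB:
  assumes "X \<noteq> {}" and "Y \<noteq> {}"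
  shows "prodB (MeetB X) (MeetB Y) = MeetB {prodB x y | x y. x \<in> X \<and> y \<in> Y}"
    (is "_ = MeetB ?XY")
proof (rule B_eqI)
  have "?XY \<noteq> {}" using assms by blast
  then have Yb: "MeetB ?XY = Yb \<longleftrightarrow> (\<forall>x\<in>X. \<forall>y\<in>Y. prodB x y = Yb)"
    and Nb: "MeetB ?XY = Nb \<longleftrightarrow> (\<forall>x\<in>X. \<forall>y\<in>Y. prodB x y = Nb)"
    by (auto simp: MeetB_eq_Yb_iff MeetB_eq_Nb_iff)
  show "prodB (MeetB X) (MeetB Y) = Yb \<longleftrightarrow> MeetB ?XY = Yb"
    unfolding Yb using assms by (auto simp: MeetB_eq_Yb_iff prodB_eq_Yb_iff)
  show "prodB (MeetB X) (MeetB Y) = Nb \<longleftrightarrow> MeetB ?XY = Nb"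
    unfolding Nb using assms by (auto simp: MeetB_eq_Nb_iff prodB_eq_Nb_iff)
qed

lemma glb_generated_by_maximal:
  assumes max: "G \<subseteq> max_in le P"
    and glb: "\<And>x. x \<in> P \<Longrightarrow> \<exists>T\<subseteq>G. T \<noteq> {} \<and> is_glb_in le P T x"
  shows "cmi_in le P = G" and "max_in le P = G"
    and "x \<in> P \<Longrightarrow> is_glb_in le P (cmi_in le P \<inter> {y \<in> P. le x y}) x"
proof -
  have "G \<subseteq> P" and G_max: "\<And>g y. g \<in> G \<Longrightarrow> y \<in> P \<Longrightarrow> le g y \<Longrightarrow> y = g"
    using max unfolding max_in_def by blast+
  have G_cmi: "G \<subseteq> cmi_in le P"
  proof
    fix g assume "g \<in> G"
    show "g \<in> cmi_in le P" unfolding cmi_in_def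
    proof (intro CollectI conjI allI impI)
      show "g \<in> P" using \<open>g \<in> G\<close> \<open>G \<subseteq> P\<close> by blast
      fix X assume "X \<subseteq> P" "X \<noteq> {}" "is_glb_in le P X g"
      then obtain y where "y \<in> X" "le g y" unfolding is_glb_in_def by blast
      with G_max[OF \<open>g \<in> G\<close>] \<open>X \<subseteq> P\<close> show "g \<in> X" by blast
    qed
  qed
  have "cmi_in le P \<subseteq> G"
  proof
    fix x assume x: "x \<in> cmi_in le P"
    then have "x \<in> P" unfolding cmi_in_def by simp
    then obtain T where "T \<subseteq> G" "T \<noteq> {}" "is_glb_in le P T x"
      using glb by blast
    with x \<open>G \<subseteq> P\<close> have "x \<in> T" unfolding cmi_in_def by blast
    with \<open>T \<subseteq> G\<close> show "x \<in> G" by blast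
  qed
  with G_cmi show "cmi_in le P = G" by blast
  have "max_in le P \<subseteq> G"
  proof
    fix x assume x: "x \<in> max_in le P"
    then have "x \<in> P" unfolding max_in_def by simp
    then obtain T where "T \<subseteq> G" "T \<noteq> {}" "is_glb_in le P T x"
      using glb by blast
    then obtain t where "t \<in> T" "t \<in> P" "le x t"
      using \<open>G \<subseteq> P\<close> unfolding is_glb_in_def by blast
    with x have "t = x" unfolding max_in_def by blast
    with \<open>t \<in> T\<close> \<open>T \<subseteq> G\<close> show "x \<in> G" by blast
  qed
  with max show "max_in le P = G" by blast
  assume "x \<in> P"
  then obtain T where T: "T \<subseteq> G" "is_glb_in le P T x" using glb by blast
  then have "T \<subseteq> cmi_in le P \<inter> {y \<in> P. le x y}"
    using G_cmi \<open>G \<subseteq> P\<close> unfolding is_glb_in_def by blast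
  with T(2) show "is_glb_in le P (cmi_in le P \<inter> {y \<in> P. le x y}) x"
    unfolding is_glb_in_def by blast
qed

definition pure_above :: "('e \<Rightarrow> 'a::order \<Rightarrow> B) \<Rightarrow> 'a \<Rightarrow> 'a set" where
  "pure_above eps a = pure_states eps \<inter> {s. a \<le> s}"

lemma SE_Chu_le_iff: "SE_Chu eps \<Longrightarrow> s \<le> s' \<longleftrightarrow> (\<forall>l. leB (eps l s) (eps l s'))"
  unfolding SE_Chu_def by (elim conjE) (rule spec2)

lemma SE_Chu_unit_effect: "SE_Chu eps \<Longrightarrow> \<exists>u. \<forall>s. eps u s = Yb"
  unfolding SE_Chu_def by (elim conjE)

lemma SE_Chu_eval_glb:
  assumes "SE_Chu eps" and "X \<noteq> {}" and "is_glb_in (\<le>) UNIV X m"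
  shows "eps l m = MeetB (eps l ` X)"
proof -
  from assms(1) have "\<forall>X m l. X \<noteq> {} \<longrightarrow> is_glb_in (\<le>) UNIV X m \<longrightarrow> eps l m = MeetB (eps l ` X)"
    unfolding SE_Chu_def by (elim conjE)
  with assms(2,3) show ?thesis by blast
qed

lemma pure_state_maximal:
  "pure_description eps \<Longrightarrow> a \<in> pure_states eps \<Longrightarrow> a \<le> s \<Longrightarrow> s = a"
  unfolding pure_description_def pure_states_def max_in_def by auto

lemma is_glb_pure_above: "pure_description eps \<Longrightarrow> is_glb_in (\<le>) UNIV (pure_above eps a) a"
  unfolding pure_description_def pure_above_def by (elim conjE) (erule spec)

lemma pure_above_nonempty:
  assumes "pure_description eps"
  shows "pure_above eps a \<noteq> {}"
proof
  assume "pure_above eps a = {}"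
  with is_glb_pure_above[OF assms] have "s \<le> a" for s
    unfolding is_glb_in_def by simp
  then have "a \<in> max_in (\<le>) UNIV" unfolding max_in_def by (auto intro: order.antisym)
  then have "a \<in> pure_above eps a"
    using assms unfolding pure_description_def pure_states_def pure_above_def by auto
  with \<open>pure_above eps a = {}\<close> show False by simp
qed

lemma eval_eq_MeetB_pure_above:
  assumes "SE_Chu eps" and "pure_description eps"
  shows "eps l a = MeetB (eps l ` pure_above eps a)"
  using SE_Chu_eval_glb[OF assms(1) pure_above_nonempty[OF assms(2)] is_glb_pure_above[OF assms(2)]] .

lemma leF_refl: "leF f f"
  unfolding leF_def leB_def by simp

lemma infTens_apply: "infTens epsA epsB I x = MeetB ((\<lambda>(a, b). tens epsA epsB a b x) ` I)"
  by (cases x) (simp add: infTens_def tens_def case_prod_unfold)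

lemma infTens_singleton: "infTens epsA epsB {(a, b)} = tens epsA epsB a b"
  by (rule ext) (simp add: infTens_apply)

lemma tens_in_minTensor: "tens epsA epsB a b \<in> minTensor epsA epsB"
  unfolding minTensor_def mem_Collect_eq by (metis infTens_singleton insert_not_empty)

lemma leF_infTens_iff:
  "I \<noteq> {} \<Longrightarrow> leF f (infTens epsA epsB I) \<longleftrightarrow> (\<forall>(a, b)\<in>I. leF f (tens epsA epsB a b))"
  unfolding leF_def infTens_apply by (simp add: leB_MeetB_iff case_prod_unfold) blast

lemma is_glb_in_infTens:
  assumes "I \<noteq> {}"
  shows "is_glb_in leF (minTensor epsA epsB) ((\<lambda>(a, b). tens epsA epsB a b) ` I)
           (infTens epsA epsB I)"
  unfolding is_glb_in_def
proof (intro conjI ballI impI)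
  show "infTens epsA epsB I \<in> minTensor epsA epsB"
    unfolding minTensor_def using assms by blast
  fix t assume "t \<in> (\<lambda>(a, b). tens epsA epsB a b) ` I"
  then obtain a b where "(a, b) \<in> I" and "t = tens epsA epsB a b" by auto
  with leF_infTens_iff[OF assms] leF_refl show "leF (infTens epsA epsB I) t" by fast
next
  fix f assume "\<forall>t\<in>(\<lambda>(a, b). tens epsA epsB a b) ` I. leF f t"
  then show "leF f (infTens epsA epsB I)"
    unfolding leF_infTens_iff[OF assms] by (simp add: case_prod_unfold)
qed

lemma infTens_UN:
  assumes "J \<noteq> {}" and "\<And>j. j \<in> J \<Longrightarrow> I j \<noteq> {}"
  shows "infTens epsA epsB (\<Union>j\<in>J. I j) x = MeetB ((\<lambda>j. infTens epsA epsB (I j) x) ` J)"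
  using assms by (simp add: infTens_apply image_UN MeetB_UN)

lemma tens_eq_infTens_pure_above:
  assumes "SE_Chu epsA" "pure_description epsA" "SE_Chu epsB" "pure_description epsB"
  shows "tens epsA epsB a b = infTens epsA epsB (pure_above epsA a \<times> pure_above epsB b)"
proof (rule ext, clarify)
  fix lA lB
  have "tens epsA epsB a b (lA, lB)
      = prodB (MeetB (epsA lA ` pure_above epsA a)) (MeetB (epsB lB ` pure_above epsB b))"
    using eval_eq_MeetB_pure_above[OF assms(1,2), of lA a]
      eval_eq_MeetB_pure_above[OF assms(3,4), of lB b]
    by (simp add: tens_def)
  also have "\<dots> = MeetB {prodB x y | x y. x \<in> epsA lA ` pure_above epsA a \<and> y \<in> epsB lB ` pure_above epsB b}"
    using pure_above_nonempty[OF assms(2), of a] pure_above_nonempty[OF assms(4), of b]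
    by (intro prodB_MeetB) auto
  also have "{prodB x y | x y. x \<in> epsA lA ` pure_above epsA a \<and> y \<in> epsB lB ` pure_above epsB b}
      = (\<lambda>(a', b'). tens epsA epsB a' b' (lA, lB)) ` (pure_above epsA a \<times> pure_above epsB b)"
    by (auto simp: tens_def)
  finally show "tens epsA epsB a b (lA, lB)
      = infTens epsA epsB (pure_above epsA a \<times> pure_above epsB b) (lA, lB)"
    by (simp add: infTens_apply)
qed

lemma minTensor_eq_infTens_pure:
  assumes "SE_Chu epsA" "pure_description epsA" "SE_Chu epsB" "pure_description epsB"
  shows "minTensor epsA epsB
       = {infTens epsA epsB I | I. I \<noteq> {} \<and> I \<subseteq> pure_states epsA \<times> pure_states epsB}"
proof
  show "{infTens epsA epsB I | I. I \<noteq> {} \<and> I \<subseteq> pure_states epsA \<times> pure_states epsB}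
      \<subseteq> minTensor epsA epsB"
    unfolding minTensor_def by blast
  show "minTensor epsA epsB
      \<subseteq> {infTens epsA epsB I | I. I \<noteq> {} \<and> I \<subseteq> pure_states epsA \<times> pure_states epsB}"
  proof
    fix \<sigma> assume "\<sigma> \<in> minTensor epsA epsB"
    then obtain J where "J \<noteq> {}" and \<sigma>: "\<sigma> = infTens epsA epsB J"
      unfolding minTensor_def by blast
    define cover where "cover = (\<lambda>(a, b). pure_above epsA a \<times> pure_above epsB b)"
    have cover_ne: "cover j \<noteq> {}" for j
      using pure_above_nonempty[OF assms(2)] pure_above_nonempty[OF assms(4)]
      unfolding cover_def by (auto split: prod.split)
    have "\<sigma> = infTens epsA epsB (\<Union>j\<in>J. cover j)"
    proof
      fix x
      have "infTens epsA epsB (\<Union>j\<in>J. cover j) x = MeetB ((\<lambda>j. infTens epsA epsB (cover j) x) ` J)"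
        using \<open>J \<noteq> {}\<close> cover_ne by (rule infTens_UN)
      also have "(\<lambda>j. infTens epsA epsB (cover j) x) = (\<lambda>(a, b). tens epsA epsB a b x)"
        by (rule ext) (simp add: cover_def tens_eq_infTens_pure_above[OF assms] split: prod.split)
      also have "MeetB ((\<lambda>(a, b). tens epsA epsB a b x) ` J) = \<sigma> x"
        by (simp add: \<sigma> infTens_apply)
      finally show "\<sigma> x = infTens epsA epsB (\<Union>j\<in>J. cover j) x" by simp
    qed
    moreover have "(\<Union>j\<in>J. cover j) \<noteq> {}" using \<open>J \<noteq> {}\<close> cover_ne by blast
    moreover have "(\<Union>j\<in>J. cover j) \<subseteq> pure_states epsA \<times> pure_states epsB"
      unfolding cover_def pure_above_def by auto
    ultimately show "\<sigma> \<in> {infTens epsA epsB I | I. I \<noteq> {} \<and> I \<subseteq> pure_states epsA \<times> pure_states epsB}"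
      by blast
  qed
qed

lemma tens_le_tensD:
  assumes "SE_Chu epsA" "SE_Chu epsB" and le: "leF (tens epsA epsB a b) (tens epsA epsB c d)"
  shows "a \<le> c" and "b \<le> d"
proof -
  obtain uA uB where uA: "\<And>s. epsA uA s = Yb" and uB: "\<And>s. epsB uB s = Yb"
    using SE_Chu_unit_effect[OF assms(1)] SE_Chu_unit_effect[OF assms(2)] by blast
  have "leB (epsA l a) (epsA l c)" for l
    using le[unfolded leF_def, rule_format, of "(l, uB)"] by (simp add: tens_def uB)
  with SE_Chu_le_iff[OF assms(1)] show "a \<le> c" by blast
  have "leB (epsB l b) (epsB l d)" for l
    using le[unfolded leF_def, rule_format, of "(uA, l)"] by (simp add: tens_def uA)
  with SE_Chu_le_iff[OF assms(2)] show "b \<le> d" by blast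
qed

lemma tens_pure_in_max_in:
  assumes "SE_Chu epsA" "pure_description epsA" "SE_Chu epsB" "pure_description epsB"
    and "a \<in> pure_states epsA" and "b \<in> pure_states epsB"
  shows "tens epsA epsB a b \<in> max_in leF (minTensor epsA epsB)"
  unfolding max_in_def
proof (intro CollectI conjI ballI impI)
  show "tens epsA epsB a b \<in> minTensor epsA epsB" by (rule tens_in_minTensor)
  fix \<sigma> assume "\<sigma> \<in> minTensor epsA epsB" and le: "leF (tens epsA epsB a b) \<sigma>"
  then obtain J where "J \<noteq> {}" and \<sigma>: "\<sigma> = infTens epsA epsB J"
    unfolding minTensor_def by blast
  from le have le_J: "\<forall>(c, d)\<in>J. leF (tens epsA epsB a b) (tens epsA epsB c d)"
    unfolding \<sigma> leF_infTens_iff[OF \<open>J \<noteq> {}\<close>] .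
  have "J \<subseteq> {(a, b)}"
  proof clarify
    fix c d assume "(c, d) \<in> J"
    with le_J have le_cd: "leF (tens epsA epsB a b) (tens epsA epsB c d)" by blast
    have "c = a" by (rule pure_state_maximal[OF assms(2,5) tens_le_tensD(1)[OF assms(1,3) le_cd]])
    moreover have "d = b"
      by (rule pure_state_maximal[OF assms(4,6) tens_le_tensD(2)[OF assms(1,3) le_cd]])
    ultimately show "c = a \<and> d = b" ..
  qed
  with \<open>J \<noteq> {}\<close> have "J = {(a, b)}" by blast
  then show "\<sigma> = tens epsA epsB a b" by (simp add: \<sigma> infTens_singleton)
qed

theorem mainTheorem13:
  fixes epsA :: "'eA \<Rightarrow> 'sA::order \<Rightarrow> B" and epsB :: "'eB \<Rightarrow> 'sB::order \<Rightarrow> B"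
  assumes "SE_Chu epsA" and "pure_description epsA"
      and "SE_Chu epsB" and "pure_description epsB"
  shows "(\<forall>\<sigma>\<in>minTensor epsA epsB.
            is_glb_in leF (minTensor epsA epsB)
              (cmi_in leF (minTensor epsA epsB) \<inter> {\<sigma>'\<in>minTensor epsA epsB. leF \<sigma> \<sigma>'}) \<sigma>)
       \<and> cmi_in leF (minTensor epsA epsB)
           = {tens epsA epsB sA sB | sA sB. sA \<in> pure_states epsA \<and> sB \<in> pure_states epsB}
       \<and> max_in leF (minTensor epsA epsB)
           = {tens epsA epsB sA sB | sA sB. sA \<in> pure_states epsA \<and> sB \<in> pure_states epsB}"
proof -
  let ?G = "{tens epsA epsB sA sB | sA sB. sA \<in> pure_states epsA \<and> sB \<in> pure_states epsB}"
  have G_max: "?G \<subseteq> max_in leF (minTensor epsA epsB)"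
    using tens_pure_in_max_in[OF assms] by blast
  have G_glb: "\<exists>T\<subseteq>?G. T \<noteq> {} \<and> is_glb_in leF (minTensor epsA epsB) T \<sigma>"
    if "\<sigma> \<in> minTensor epsA epsB" for \<sigma>
  proof -
    from that obtain I where "I \<noteq> {}" and I: "I \<subseteq> pure_states epsA \<times> pure_states epsB"
      and \<sigma>: "\<sigma> = infTens epsA epsB I"
      unfolding minTensor_eq_infTens_pure[OF assms] by blast
    show ?thesis
    proof (intro exI conjI)
      show "(\<lambda>(a, b). tens epsA epsB a b) ` I \<subseteq> ?G" using I by auto
      show "(\<lambda>(a, b). tens epsA epsB a b) ` I \<noteq> {}" using \<open>I \<noteq> {}\<close> by simp
      show "is_glb_in leF (minTensor epsA epsB) ((\<lambda>(a, b). tens epsA epsB a b) ` I) \<sigma>"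
        unfolding \<sigma> using \<open>I \<noteq> {}\<close> by (rule is_glb_in_infTens)
    qed
  qed
  note generated = glb_generated_by_maximal[OF G_max G_glb]
  show ?thesis by (intro conjI ballI generated)
qed

end
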